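(* A tournament $G$ does not have a subtournament isomorphic to $D_4$ if and only if $G$ can be written as $T_n(I^1,\ldots,I^n)$ or as $I_2(T_n(I^1,\ldots,I^n), I)$, where $n \ge 1$ is odd, $I_2$ is taken with its standard ordering of vertices, and $I^1,\ldots,I^n,I$ are transitive tournaments.
   Context: A tournament is a finite, non-null, loopless directed graph in which for any two distinct vertices $u,v$ there is exactly one edge with both ends in $\{u,v\}$; write $u\to v$ for the edge from $u$ to $v$, and $X\Rightarrow Y$ if $x\to y$ for all $x\in X,y\in Y$. A subtournament is the tournament induced on a nonempty vertex subset. A tournament is transitive if its vertices can be ordered $v_1,\dots,v_n$ with $v_i\to v_j$ whenever $i<j$ (the standard ordering); $I_n$ denotes the transitive tournament on $n$ vertices. Substitution: given a tournament $G$ with an ordering $v_1,\dots,v_n$ of its vertices and tournaments $H_1,\dots,H_n$, $G(H_1,\dots,H_n)$ is a tournament whose vertex set is a disjoint union $V_1\cup\dots\cup V_n$, with $V_i\Rightarrow V_j$ whenever $v_i\to v_j$ and the subtournament on $V_i$ isomorphic to $H_i$. For $n=2k+1$, $T_n$ is the tournament on $v_1,\dots,v_n$ (ordered in this way for substitution) with $v_i\to v_j$ iff $j\equiv i+1,\dots,i+k \pmod n$. $D_4$ is the 4-vertex tournament consisting of a cyclic triangle $C$ and a vertex $v$ with $v\to c$ for every vertex $c$ of $C$. *)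

theory Defs
  imports Main
begin

text \<open>A tournament is given by a vertex set V and an edge relation E
  (E u v means u \<rightarrow> v); only the values of E on V matter.\<close>
definition tournament :: "'a set \<Rightarrow> ('a \<Rightarrow> 'a \<Rightarrow> bool) \<Rightarrow> bool" where
  "tournament V E \<longleftrightarrow> finite V \<and> V \<noteq> {} \<and> (\<forall>u\<in>V. \<not> E u u) \<and>
     (\<forall>u\<in>V. \<forall>v\<in>V. u \<noteq> v \<longrightarrow> (E u v \<longleftrightarrow> \<not> E v u))"

definition tourn_iso :: "'a set \<Rightarrow> ('a \<Rightarrow> 'a \<Rightarrow> bool) \<Rightarrow> 'b set \<Rightarrow> ('b \<Rightarrow> 'b \<Rightarrow> bool) \<Rightarrow> bool" where
  "tourn_iso V E W F \<longleftrightarrow> (\<exists>f. bij_betw f V W \<and> (\<forall>u\<in>V. \<forall>v\<in>V. E u v \<longleftrightarrow> F (f u) (f v)))"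

definition transitive_tournament :: "'a set \<Rightarrow> ('a \<Rightarrow> 'a \<Rightarrow> bool) \<Rightarrow> bool" where
  "transitive_tournament V E \<longleftrightarrow>
     (\<exists>f. bij_betw f {..<card V} V \<and> (\<forall>i j. i < j \<and> j < card V \<longrightarrow> E (f i) (f j)))"

definition D4_V :: "nat set" where "D4_V = {0,1,2,3}"
definition D4_E :: "nat \<Rightarrow> nat \<Rightarrow> bool" where
  "D4_E u v \<longleftrightarrow> (u,v) \<in> {(0,1),(1,2),(2,0),(3,0),(3,1),(3,2)}"

definition has_D4 :: "'a set \<Rightarrow> ('a \<Rightarrow> 'a \<Rightarrow> bool) \<Rightarrow> bool" where
  "has_D4 V E \<longleftrightarrow> (\<exists>S. S \<subseteq> V \<and> tourn_iso S E D4_V D4_E)"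

definition T_edge :: "nat \<Rightarrow> nat \<Rightarrow> nat \<Rightarrow> bool" where
  "T_edge n i j \<longleftrightarrow> (j + n - i) mod n \<in> {1..n div 2}"

text \<open>(V,E) can be written as G(H_0,...,H_{n-1}) where G has vertices 0..n-1 and edge
  relation GE, and P i S says that the subtournament on the part S is of the
  required shape for H_i.\<close>
definition subst_form :: "'a set \<Rightarrow> ('a \<Rightarrow> 'a \<Rightarrow> bool) \<Rightarrow> nat \<Rightarrow> (nat \<Rightarrow> nat \<Rightarrow> bool)
    \<Rightarrow> (nat \<Rightarrow> 'a set \<Rightarrow> bool) \<Rightarrow> bool" where
  "subst_form V E n GE P \<longleftrightarrow> (\<exists>part :: nat \<Rightarrow> 'a set.
     (\<forall>i<n. part i \<noteq> {} \<and> part i \<subseteq> V) \<and>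
     V = (\<Union>i<n. part i) \<and>
     (\<forall>i<n. \<forall>j<n. i \<noteq> j \<longrightarrow> part i \<inter> part j = {}) \<and>
     (\<forall>i<n. \<forall>j<n. GE i j \<longrightarrow> (\<forall>x\<in>part i. \<forall>y\<in>part j. E x y)) \<and>
     (\<forall>i<n. P i (part i)))"

definition T_of_transitive :: "'a set \<Rightarrow> ('a \<Rightarrow> 'a \<Rightarrow> bool) \<Rightarrow> nat \<Rightarrow> bool" where
  "T_of_transitive V E n \<longleftrightarrow> subst_form V E n (T_edge n) (\<lambda>i S. transitive_tournament S E)"

end

theory Submission
  imports Defs
begin

text \<open>A tournament is D4-free iff every out-neighbourhood is transitive, and both shapes are
  readily seen to have this property. Conversely, induct on the number of vertices: a sink can be
  split off as the final transitive block, and of two twins (vertices that all other vertices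
  treat alike) one can be put back into the block of the other. If there is neither a sink nor a
  pair of twins, in-neighbourhoods are transitive as well. Sending each vertex v to the first
  vertex succ v of its transitively ordered out-neighbourhood then gives a permutation whose
  iterates list that out-neighbourhood as succ v, succ (succ v), ..., all out-degrees agree, say
  k, and the orbit v, succ v, ..., succ^(2k) v is the whole tournament, which is therefore
  T_{2k+1} with singleton blocks.\<close>

section \<open>Transitive tournaments\<close>

lemma tournament_irrefl: "tournament V E \<Longrightarrow> x \<in> V \<Longrightarrow> \<not> E x x"
  by (simp add: tournament_def)

lemma tournament_asym: "tournament V E \<Longrightarrow> x \<in> V \<Longrightarrow> y \<in> V \<Longrightarrow> E x y \<Longrightarrow> \<not> E y x"
  unfolding tournament_def by metis

lemma tournament_total:
  "tournament V E \<Longrightarrow> x \<in> V \<Longrightarrow> y \<in> V \<Longrightarrow> x \<noteq> y \<Longrightarrow> \<not> E x y \<Longrightarrow> E y x"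
  unfolding tournament_def by metis

lemma tournament_finite: "tournament V E \<Longrightarrow> finite V"
  by (simp add: tournament_def)

lemma tournament_subset: "tournament V E \<Longrightarrow> S \<subseteq> V \<Longrightarrow> S \<noteq> {} \<Longrightarrow> tournament S E"
  unfolding tournament_def by (auto intro: finite_subset)

lemma transitive_tournament_singleton: "transitive_tournament {x} E"
  unfolding transitive_tournament_def
  by (rule exI[of _ "\<lambda>_. x"]) (auto simp: bij_betw_def lessThan_Suc)

lemma transitive_tournament_index_less:
  assumes T: "tournament V E" and S: "S \<subseteq> V" and f: "bij_betw f {..<card S} S"
    and ord: "\<And>i j. i < j \<Longrightarrow> j < card S \<Longrightarrow> E (f i) (f j)"
    and ij: "i < card S" "j < card S" "E (f i) (f j)"
  shows "i < j"
proof (rule ccontr)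
  assume "\<not> i < j"
  then consider "i = j" | "j < i" by linarith
  then show False
  proof cases
    case 1
    then show ?thesis using ij tournament_irrefl[OF T] bij_betwE[OF f] S by blast
  next
    case 2
    then show ?thesis using ord[of j i] ij tournament_asym[OF T] bij_betwE[OF f] S by blast
  qed
qed

lemma transitive_tournament_imp_transp_on:
  assumes T: "tournament V E" and S: "S \<subseteq> V" and tt: "transitive_tournament S E"
  shows "transp_on S E"
proof (rule transp_onI)
  obtain f where f: "bij_betw f {..<card S} S"
    and ord: "\<And>i j. i < j \<Longrightarrow> j < card S \<Longrightarrow> E (f i) (f j)"
    using tt unfolding transitive_tournament_def by blast
  have index: "\<exists>i<card S. x = f i" if "x \<in> S" for x
    using that bij_betw_imp_surj_on[OF f] by force
  note less = transitive_tournament_index_less[OF T S f ord]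
  fix x y z assume xyz: "x \<in> S" "y \<in> S" "z \<in> S" "E x y" "E y z"
  obtain i where i: "i < card S" "x = f i" using index xyz(1) by blast
  obtain j where j: "j < card S" "y = f j" using index xyz(2) by blast
  obtain l where l: "l < card S" "z = f l" using index xyz(3) by blast
  have "i < j" using less i j xyz(4) by simp
  moreover have "j < l" using less j l xyz(5) by simp
  ultimately have "E (f i) (f l)" using ord l(1) by simp
  then show "E x z" using i l by simp
qed

text \<open>A vertex of minimal out-degree within S beats nobody in S.\<close>
lemma transp_on_has_sink:
  assumes T: "tournament V E" and S: "S \<subseteq> V" "S \<noteq> {}" and tr: "transp_on S E"
  shows "\<exists>z\<in>S. \<forall>w\<in>S. w \<noteq> z \<longrightarrow> E w z"
proof -
  have fin: "finite S" using T S tournament_finite finite_subset by blast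
  define h where "h x = card {w\<in>S. E x w}" for x
  define z where "z = arg_min_on h S"
  have z: "z \<in> S" "\<And>w. w \<in> S \<Longrightarrow> h z \<le> h w"
    unfolding z_def using arg_min_if_finite(1)[OF fin S(2)] arg_min_least[OF fin S(2)] by auto
  have "E w z" if w: "w \<in> S" "w \<noteq> z" for w
  proof (rule ccontr)
    assume "\<not> E w z"
    then have "E z w" using tournament_total[OF T] w z S by blast
    then have "{y\<in>S. E w y} \<subseteq> {y\<in>S. E z y}"
      using transp_onD[OF tr] w z(1) by blast
    moreover have "w \<in> {y\<in>S. E z y} - {y\<in>S. E w y}"
      using \<open>E z w\<close> w tournament_irrefl[OF T, of w] S by blast
    ultimately have "{y\<in>S. E w y} \<subset> {y\<in>S. E z y}" by blast
    then have "h w < h z" unfolding h_def by (rule psubset_card_mono[rotated]) (use fin in auto)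
    with z(2)[OF w(1)] show False by simp
  qed
  then show ?thesis using z(1) by blast
qed

lemma transp_on_imp_transitive_tournament:
  assumes T: "tournament V E" and "S \<subseteq> V" and "transp_on S E"
  shows "transitive_tournament S E"
  using assms(2,3)
proof (induction "card S" arbitrary: S rule: less_induct)
  case less
  show ?case
  proof (cases "S = {}")
    case True
    then show ?thesis unfolding transitive_tournament_def by (auto simp: bij_betw_def)
  next
    case False
    have fin: "finite S" using T less.prems tournament_finite finite_subset by blast
    obtain z where z: "z \<in> S" "\<And>w. w \<in> S \<Longrightarrow> w \<noteq> z \<Longrightarrow> E w z"
      using transp_on_has_sink[OF T less.prems(1) False less.prems(2)] by blast
    let ?W = "S - {z}"
    have "card ?W < card S" using fin z(1) by (rule card_Diff1_less)
    then have "transitive_tournament ?W E"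
      using less.hyps[of ?W] less.prems transp_on_subset[OF less.prems(2), of ?W] by blast
    then obtain f where f: "bij_betw f {..<card ?W} ?W"
      and ord: "\<And>i j. i < j \<Longrightarrow> j < card ?W \<Longrightarrow> E (f i) (f j)"
      unfolding transitive_tournament_def by blast
    have cS: "card S = Suc (card ?W)" using card_Suc_Diff1[OF fin z(1)] by simp
    define g where "g = f(card ?W := z)"
    have "g ` {..<card S} = insert z (f ` {..<card ?W})"
      unfolding g_def cS lessThan_Suc by auto
    also have "\<dots> = S" using f z(1) by (auto simp: bij_betw_def)
    finally have "bij_betw g {..<card S} S"
      by (simp add: bij_betw_def eq_card_imp_inj_on)
    moreover have "E (g i) (g j)" if "i < j" "j < card S" for i j
    proof (cases "j = card ?W")
      case True
      then have "f i \<in> ?W" using that bij_betwE[OF f] by simp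
      then show ?thesis using True that z(2) unfolding g_def by simp
    next
      case False
      then show ?thesis using that ord unfolding g_def cS by simp
    qed
    ultimately show ?thesis unfolding transitive_tournament_def by blast
  qed
qed

section \<open>D4-freeness and blow-ups of T_n\<close>

definition D4_free :: "'a set \<Rightarrow> ('a \<Rightarrow> 'a \<Rightarrow> bool) \<Rightarrow> bool" where
  "D4_free V E \<longleftrightarrow> \<not> (\<exists>v\<in>V. \<exists>x\<in>V. \<exists>y\<in>V. \<exists>z\<in>V.
     E v x \<and> E v y \<and> E v z \<and> E x y \<and> E y z \<and> E z x)"

lemma D4_freeD:
  "D4_free V E \<Longrightarrow> v \<in> V \<Longrightarrow> x \<in> V \<Longrightarrow> y \<in> V \<Longrightarrow> z \<in> V \<Longrightarrow>
    E v x \<Longrightarrow> E v y \<Longrightarrow> E v z \<Longrightarrow> E x y \<Longrightarrow> E y z \<Longrightarrow> E z x \<Longrightarrow> False"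
  unfolding D4_free_def by blast

lemma D4_free_subset: "D4_free V E \<Longrightarrow> W \<subseteq> V \<Longrightarrow> D4_free W E"
  unfolding D4_free_def by blast

lemma has_D4_iff_not_D4_free:
  assumes T: "tournament V E"
  shows "has_D4 V E \<longleftrightarrow> \<not> D4_free V E"
proof
  assume "has_D4 V E"
  then obtain S f where S: "S \<subseteq> V" and f: "bij_betw f S D4_V"
    and iso: "\<And>u w. u \<in> S \<Longrightarrow> w \<in> S \<Longrightarrow> E u w \<longleftrightarrow> D4_E (f u) (f w)"
    unfolding has_D4_def tourn_iso_def by blast
  define g where "g = inv_into S f"
  have g: "g a \<in> S" "f (g a) = a" if "a \<in> D4_V" for a
    unfolding g_def using that bij_betw_inv_into_right[OF f] bij_betwE[OF bij_betw_inv_into[OF f]]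
    by blast+
  have D: "0 \<in> D4_V" "1 \<in> D4_V" "2 \<in> D4_V" "3 \<in> D4_V" by (simp_all add: D4_V_def)
  have edge: "E (g a) (g b)" if "a \<in> D4_V" "b \<in> D4_V" "D4_E a b" for a b
    using iso[OF g(1)[OF that(1)] g(1)[OF that(2)]] g(2) that by simp
  have "E (g 3) (g 0)" "E (g 3) (g 1)" "E (g 3) (g 2)" "E (g 0) (g 1)" "E (g 1) (g 2)" "E (g 2) (g 0)"
    by (rule edge, simp_all add: D4_V_def D4_E_def)+
  moreover have "g 3 \<in> V" "g 0 \<in> V" "g 1 \<in> V" "g 2 \<in> V" using g(1) D S by blast+
  ultimately show "\<not> D4_free V E" using D4_freeD[of V E "g 3" "g 0" "g 1" "g 2"] by blast
next
  assume "\<not> D4_free V E"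
  then obtain v x y z where in4: "v \<in> V" "x \<in> V" "y \<in> V" "z \<in> V"
    and e: "E v x" "E v y" "E v z" "E x y" "E y z" "E z x"
    unfolding D4_free_def by blast
  have ne: "\<not> E x v" "\<not> E y v" "\<not> E z v" "\<not> E y x" "\<not> E z y" "\<not> E x z"
    using e in4 tournament_asym[OF T] by blast+
  have ir: "\<not> E v v" "\<not> E x x" "\<not> E y y" "\<not> E z z" using in4 tournament_irrefl[OF T] by blast+
  have d: "v \<noteq> x" "v \<noteq> y" "v \<noteq> z" "x \<noteq> y" "y \<noteq> z" "x \<noteq> z" using e ir by auto
  define f where "f w = (if w = x then 0 else if w = y then 1 else if w = z then 2 else 3::nat)" for w
  have fv: "f v = 3" "f x = 0" "f y = 1" "f z = 2" using d unfolding f_def by auto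
  have "bij_betw f {v, x, y, z} D4_V"
    using fv d unfolding bij_betw_def inj_on_def D4_V_def by auto
  moreover have "E u w \<longleftrightarrow> D4_E (f u) (f w)" if "u \<in> {v, x, y, z}" "w \<in> {v, x, y, z}" for u w
    using that by (elim insertE emptyE) (simp_all add: e ne ir fv D4_E_def)
  ultimately have "tourn_iso {v, x, y, z} E D4_V D4_E" unfolding tourn_iso_def by blast
  moreover have "{v, x, y, z} \<subseteq> V" using in4 by simp
  ultimately show "has_D4 V E" unfolding has_D4_def by blast
qed

lemma subst_formE:
  assumes "subst_form V E n GE P"
  obtains part :: "nat \<Rightarrow> 'a set"
  where "\<And>i. i < n \<Longrightarrow> part i \<noteq> {}" "\<And>i. i < n \<Longrightarrow> part i \<subseteq> V"
    and "V = (\<Union>i<n. part i)"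
    and "\<And>i j. i < n \<Longrightarrow> j < n \<Longrightarrow> i \<noteq> j \<Longrightarrow> part i \<inter> part j = {}"
    and "\<And>i j x y. i < n \<Longrightarrow> j < n \<Longrightarrow> GE i j \<Longrightarrow> x \<in> part i \<Longrightarrow> y \<in> part j \<Longrightarrow> E x y"
    and "\<And>i. i < n \<Longrightarrow> P i (part i)"
proof -
  from assms obtain part where
    nonempty: "\<forall>i<n. part i \<noteq> {} \<and> part i \<subseteq> V" and cover: "V = (\<Union>i<n. part i)"
    and disjoint: "\<forall>i<n. \<forall>j<n. i \<noteq> j \<longrightarrow> part i \<inter> part j = {}"
    and edges: "\<forall>i<n. \<forall>j<n. GE i j \<longrightarrow> (\<forall>x\<in>part i. \<forall>y\<in>part j. E x y)"
    and shape: "\<forall>i<n. P i (part i)"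
    unfolding subst_form_def by (elim exE conjE)
  show thesis
    by (rule that[OF _ _ cover]) (use nonempty disjoint edges shape in blast)+
qed

lemma cyclic_offset_eq:
  fixes i j n :: nat
  assumes "i < n" "j < n"
  shows "(j + n - i) mod n = (if i \<le> j then j - i else j + n - i)"
proof (cases "i \<le> j")
  case True
  have "(j + n - i) mod n = ((j - i) + n) mod n" by (simp only: add_diff_assoc2[OF True])
  also have "\<dots> = j - i" using assms(2) by simp
  finally show ?thesis using True by simp
qed (use assms in simp)

lemma cyclic_offset_add:
  fixes a b i n :: nat
  assumes "i < n" "a < n"
  shows "(b + n - i) mod n = ((a + n - i) mod n + (b + n - a) mod n) mod n"
proof -
  have "(a + n - i) + (b + n - a) = (b + n - i) + n" using assms by simp
  then show ?thesis by (metis mod_add_eq mod_add_self2)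
qed

lemma T_edge_total:
  assumes "odd n" "i < n" "j < n" "i \<noteq> j"
  shows "T_edge n i j \<or> T_edge n j i"
proof -
  have "n = 2 * (n div 2) + 1" using assms(1) by simp
  then show ?thesis
    unfolding T_edge_def cyclic_offset_eq[OF assms(2,3)] cyclic_offset_eq[OF assms(3,2)]
    using assms(2-4) by auto
qed

lemma T_edge_offset_less:
  assumes "odd n" "i < n" "a < n" "(a + n - i) mod n \<le> n div 2" "T_edge n a b"
  shows "(a + n - i) mod n < (b + n - i) mod n"
proof -
  have "(b + n - a) mod n \<in> {1..n div 2}" using assms(5) unfolding T_edge_def .
  moreover have "n div 2 + n div 2 < n" using assms(1) by presburger
  ultimately show ?thesis using assms(4) cyclic_offset_add[OF assms(2,3), of b] by simp
qed

text \<open>Measure blocks by their cyclic offset from the block of v: out-neighbours of v have offset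
  at most n div 2, and an edge between two of them in different blocks strictly increases the
  offset, so a cyclic triangle dominated by v lies inside one transitive block.\<close>
lemma T_of_transitive_D4_free:
  assumes T: "tournament V E" and n: "odd n" and F: "T_of_transitive V E n"
  shows "D4_free V E"
proof -
  obtain part where "\<And>i. i < n \<Longrightarrow> part i \<noteq> {}" and sub: "\<And>i. i < n \<Longrightarrow> part i \<subseteq> V"
    and cover: "V = (\<Union>i<n. part i)"
    and "\<And>i j. i < n \<Longrightarrow> j < n \<Longrightarrow> i \<noteq> j \<Longrightarrow> part i \<inter> part j = {}"
    and edges: "\<And>i j x y. i < n \<Longrightarrow> j < n \<Longrightarrow> T_edge n i j \<Longrightarrow> x \<in> part i \<Longrightarrow> y \<in> part j \<Longrightarrow> E x y"
    and trans: "\<And>i. i < n \<Longrightarrow> transitive_tournament (part i) E"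
    by (rule subst_formE[OF F[unfolded T_of_transitive_def]]) blast
  define p where "p w = (SOME i. i < n \<and> w \<in> part i)" for w
  have p: "p w < n" "w \<in> part (p w)" if "w \<in> V" for w
    using someI_ex[of "\<lambda>i. i < n \<and> w \<in> part i"] that cover unfolding p_def by auto
  have block_edge: "T_edge n (p a) (p b)" if "a \<in> V" "b \<in> V" "E a b" "p a \<noteq> p b" for a b
  proof -
    have "\<not> E b a" using tournament_asym[OF T] that by blast
    then have "\<not> T_edge n (p b) (p a)" using edges p that by blast
    then show ?thesis using T_edge_total[OF n] p that by blast
  qed
  show ?thesis unfolding D4_free_def
  proof clarify
    fix v x y z assume in4: "v \<in> V" "x \<in> V" "y \<in> V" "z \<in> V"
      and e: "E v x" "E v y" "E v z" "E x y" "E y z" "E z x"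
    define offset where "offset w = (p w + n - p v) mod n" for w
    have near: "offset w \<le> n div 2" if "w \<in> V" "E v w" for w
      using block_edge[of v w] in4(1) that unfolding offset_def T_edge_def by fastforce
    have mono: "offset a \<le> offset b \<and> (p a \<noteq> p b \<longrightarrow> offset a < offset b)"
      if "a \<in> V" "b \<in> V" "E v a" "E a b" for a b
      using T_edge_offset_less[OF n p(1)[OF in4(1)] p(1)[OF that(1)] near[OF that(1,3), unfolded offset_def]]
        block_edge[OF that(1,2,4)] unfolding offset_def by fastforce
    have "p x = p y" "p y = p z"
      using mono[of x y] mono[of y z] mono[of z x] in4 e by linarith+
    then have "transp_on (part (p x)) E" "x \<in> part (p x)" "y \<in> part (p x)" "z \<in> part (p x)"
      using transitive_tournament_imp_transp_on[OF T sub trans] p in4 by metis+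
    then have "E x z" using e by (blast dest: transp_onD)
    then show False using e tournament_asym[OF T] in4 by blast
  qed
qed

lemma D4_free_dominating_union:
  assumes T: "tournament V E" and V: "V = A \<union> B" and AB: "\<And>a b. a \<in> A \<Longrightarrow> b \<in> B \<Longrightarrow> E a b"
    and A: "D4_free A E" and B: "transp_on B E"
  shows "D4_free V E"
  unfolding D4_free_def
proof clarify
  fix v x y z assume in4: "v \<in> V" "x \<in> V" "y \<in> V" "z \<in> V"
    and e: "E v x" "E v y" "E v z" "E x y" "E y z" "E z x"
  have closed: "b \<in> B" if "a \<in> B" "b \<in> V" "E a b" for a b
    using that AB[of b a] tournament_asym[OF T] V by blast
  show False
  proof (cases "x \<in> B")
    case True
    then have "y \<in> B" "z \<in> B" using closed in4 e by blast+
    then have "E x z" using True e transp_onD[OF B] by blast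
    then show False using e tournament_asym[OF T] in4 by blast
  next
    case False
    then have "z \<notin> B" "y \<notin> B" "v \<notin> B" using closed in4 e by blast+
    then show False using False in4 e D4_freeD[OF A] V by blast
  qed
qed

section \<open>The two shapes, sinks and twins\<close>

definition twins :: "'a set \<Rightarrow> ('a \<Rightarrow> 'a \<Rightarrow> bool) \<Rightarrow> 'a \<Rightarrow> 'a \<Rightarrow> bool" where
  "twins V E u v \<longleftrightarrow> u \<noteq> v \<and> (\<forall>w\<in>V. w \<noteq> u \<longrightarrow> w \<noteq> v \<longrightarrow> (E u w \<longleftrightarrow> E v w))"

lemma twins_in:
  assumes T: "tournament V E" and "u \<in> V" "v \<in> V" "twins V E u v" "w \<in> V" "w \<noteq> u" "w \<noteq> v"
  shows "E w u \<longleftrightarrow> E w v"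
  using assms tournament_total[OF T] tournament_asym[OF T] unfolding twins_def by metis

lemma transp_on_insert_twin:
  assumes T: "tournament V E" and S: "S \<subseteq> V" "u \<in> S" "v \<in> V" and uv: "twins V E u v"
    and tr: "transp_on S E"
  shows "transp_on (insert v S) E"
proof (rule transp_onI)
  have twin: "E u w \<longleftrightarrow> E v w" if "w \<in> V" "w \<noteq> u" "w \<noteq> v" for w
    using uv that unfolding twins_def by blast
  have twin_in: "E w u \<longleftrightarrow> E w v" if "w \<in> V" "w \<noteq> u" "w \<noteq> v" for w
    using twins_in[OF T _ S(3) uv that] S by blast
  fix x y z assume xyz: "x \<in> insert v S" "y \<in> insert v S" "z \<in> insert v S" "E x y" "E y z"
  have V: "x \<in> V" "y \<in> V" "z \<in> V" using xyz S by auto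
  have "x \<noteq> y" "y \<noteq> z" "x \<noteq> z"
    using xyz V tournament_irrefl[OF T] tournament_asym[OF T] by metis+
  then show "E x z"
    using xyz V twin twin_in transp_onD[OF tr] S tournament_asym[OF T]
    by (smt (verit) insertE)
qed

lemma transp_on_insert_sink:
  assumes T: "tournament V E" and S: "S \<subseteq> V" "z \<in> V"
    and sink: "\<And>w. w \<in> S \<Longrightarrow> E w z" and tr: "transp_on S E"
  shows "transp_on (insert z S) E"
proof (rule transp_onI)
  have no_out: "\<not> E z a" if "a \<in> insert z S" for a
    using that sink tournament_asym[OF T] tournament_irrefl[OF T] S by blast
  fix x y w assume "x \<in> insert z S" "y \<in> insert z S" "w \<in> insert z S" "E x y" "E y w"
  then show "E x w" using no_out sink transp_onD[OF tr] by blast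
qed

lemma subst_form_insert_twin:
  assumes T: "tournament V E" and W: "W \<subseteq> V" "u \<in> W" "v \<in> V" "v \<notin> W"
    and uv: "twins V E u v" and GE_irrefl: "\<And>i. \<not> GE i i"
    and F: "subst_form W E n GE P"
    and P_insert: "\<And>i S. i < n \<Longrightarrow> P i S \<Longrightarrow> u \<in> S \<Longrightarrow> S \<subseteq> W \<Longrightarrow> P i (insert v S)"
  shows "subst_form (insert v W) E n GE P"
proof -
  obtain part where nonempty: "\<And>i. i < n \<Longrightarrow> part i \<noteq> {}" and sub: "\<And>i. i < n \<Longrightarrow> part i \<subseteq> W"
    and cover: "W = (\<Union>i<n. part i)"
    and disjoint: "\<And>i j. i < n \<Longrightarrow> j < n \<Longrightarrow> i \<noteq> j \<Longrightarrow> part i \<inter> part j = {}"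
    and edges: "\<And>i j x y. i < n \<Longrightarrow> j < n \<Longrightarrow> GE i j \<Longrightarrow> x \<in> part i \<Longrightarrow> y \<in> part j \<Longrightarrow> E x y"
    and shape: "\<And>i. i < n \<Longrightarrow> P i (part i)"
    by (rule subst_formE[OF F]) blast
  have twin: "E u w \<longleftrightarrow> E v w" if "w \<in> V" "w \<noteq> u" "w \<noteq> v" for w
    using uv that unfolding twins_def by blast
  have twin_in: "E w u \<longleftrightarrow> E w v" if "w \<in> V" "w \<noteq> u" "w \<noteq> v" for w
    using twins_in[OF T _ W(3) uv that] W by blast
  define part' where "part' i = (if u \<in> part i then insert v (part i) else part i)" for i
  have v_notin: "v \<notin> part i" if "i < n" for i using sub[OF that] W(4) by blast
  have "E x y" if ij: "i < n" "j < n" "GE i j" and xy: "x \<in> part' i" "y \<in> part' j" for i j x y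
  proof -
    have "i \<noteq> j" using GE_irrefl ij(3) by metis
    then have u_once: "\<not> (u \<in> part i \<and> u \<in> part j)" using disjoint[OF ij(1,2)] by blast
    have V: "part i \<subseteq> V" "part j \<subseteq> V" using sub ij W(1) by blast+
    consider "x = v" "u \<in> part i" "y \<in> part j" | "y = v" "u \<in> part j" "x \<in> part i"
      | "x \<in> part i" "y \<in> part j"
      using xy u_once v_notin ij unfolding part'_def by (auto split: if_splits)
    then show ?thesis
    proof cases
      case 1
      then show ?thesis using edges[OF ij, of u y] twin[of y] V u_once v_notin[OF ij(2)] by auto
    next
      case 2
      then show ?thesis using edges[OF ij, of x u] twin_in[of x] V u_once v_notin[OF ij(1)] by auto
    next
      case 3
      then show ?thesis using edges[OF ij] by blast
    qed
  qed
  moreover have "insert v W = (\<Union>i<n. part' i)"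
    using cover W(2) unfolding part'_def by auto
  moreover have "part' i \<inter> part' j = {}" if "i < n" "j < n" "i \<noteq> j" for i j
    using disjoint[OF that] v_notin that unfolding part'_def by auto
  moreover have "P i (part' i)" "part' i \<noteq> {}" "part' i \<subseteq> insert v W" if "i < n" for i
    using shape[OF that] P_insert[OF that] nonempty[OF that] sub[OF that] unfolding part'_def by auto
  ultimately show ?thesis unfolding subst_form_def by (intro exI[of _ part']) blast
qed

lemma subst_form_2I:
  assumes "A \<noteq> {}" "B \<noteq> {}" "A \<inter> B = {}" and AB: "\<And>a b. a \<in> A \<Longrightarrow> b \<in> B \<Longrightarrow> E a b"
    and "P 0 A" "P 1 B"
  shows "subst_form (A \<union> B) E 2 (\<lambda>i j. i < j) P"
  unfolding subst_form_def
proof (rule exI[of _ "\<lambda>i. if i = 0 then A else B"], intro conjI allI impI ballI)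
  show "A \<union> B = (\<Union>i<2::nat. if i = 0 then A else B)" by (auto simp: lessThan_def less_2_cases_iff)
qed (use assms in \<open>auto simp: less_2_cases_iff\<close>)

lemma subst_form_2E:
  assumes "subst_form V E 2 (\<lambda>i j. i < j) P"
  obtains A B where "A \<noteq> {}" "B \<noteq> {}" "V = A \<union> B" "A \<inter> B = {}"
    "\<And>a b. a \<in> A \<Longrightarrow> b \<in> B \<Longrightarrow> E a b" "P 0 A" "P 1 B"
proof -
  obtain part where "\<And>i. i < 2 \<Longrightarrow> part i \<noteq> {}" "V = (\<Union>i<2. part i)"
    "\<And>i j. i < 2 \<Longrightarrow> j < 2 \<Longrightarrow> i \<noteq> j \<Longrightarrow> part i \<inter> part j = {}"
    "\<And>i j x y. i < 2 \<Longrightarrow> j < 2 \<Longrightarrow> i < j \<Longrightarrow> x \<in> part i \<Longrightarrow> y \<in> part j \<Longrightarrow> E x y"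
    "\<And>i. i < 2 \<Longrightarrow> P i (part i)"
    by (rule subst_formE[OF assms]) blast
  then show thesis by (intro that[of "part 0" "part 1"]) (auto simp: lessThan_def less_2_cases_iff)
qed

definition T_blowup :: "'a set \<Rightarrow> ('a \<Rightarrow> 'a \<Rightarrow> bool) \<Rightarrow> bool" where
  "T_blowup V E \<longleftrightarrow> (\<exists>n. odd n \<and> T_of_transitive V E n)"

definition T_blowup_then_transitive :: "'a set \<Rightarrow> ('a \<Rightarrow> 'a \<Rightarrow> bool) \<Rightarrow> bool" where
  "T_blowup_then_transitive V E \<longleftrightarrow> (\<exists>n. odd n \<and> subst_form V E 2 (\<lambda>i j. i < j)
     (\<lambda>i S. if i = 0 then T_of_transitive S E n else transitive_tournament S E))"

lemma T_blowup_then_transitiveI: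
  assumes "A \<noteq> {}" "B \<noteq> {}" "A \<inter> B = {}" "\<And>a b. a \<in> A \<Longrightarrow> b \<in> B \<Longrightarrow> E a b"
    and "T_blowup A E" "transitive_tournament B E"
  shows "T_blowup_then_transitive (A \<union> B) E"
proof -
  obtain n where "odd n" "T_of_transitive A E n" using assms(5) unfolding T_blowup_def by blast
  then show ?thesis
    unfolding T_blowup_then_transitive_def using assms by (intro exI[of _ n]) (simp add: subst_form_2I)
qed

lemma T_blowup_then_transitiveE:
  assumes "T_blowup_then_transitive V E"
  obtains A B where "A \<noteq> {}" "B \<noteq> {}" "V = A \<union> B" "A \<inter> B = {}"
    "\<And>a b. a \<in> A \<Longrightarrow> b \<in> B \<Longrightarrow> E a b" "T_blowup A E" "transitive_tournament B E"
proof -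
  obtain n where "odd n" and F: "subst_form V E 2 (\<lambda>i j. i < j)
     (\<lambda>i S. if i = 0 then T_of_transitive S E n else transitive_tournament S E)"
    using assms unfolding T_blowup_then_transitive_def by blast
  obtain A B where AB: "A \<noteq> {}" "B \<noteq> {}" "V = A \<union> B" "A \<inter> B = {}"
      "\<And>a b. a \<in> A \<Longrightarrow> b \<in> B \<Longrightarrow> E a b"
    and A: "if (0::nat) = 0 then T_of_transitive A E n else transitive_tournament A E"
    and B: "if (1::nat) = 0 then T_of_transitive B E n else transitive_tournament B E"
    by (rule subst_form_2E[OF F]) blast
  have "T_blowup A E" using A \<open>odd n\<close> unfolding T_blowup_def by auto
  then show thesis using that[OF AB] B by simp
qed

lemma T_blowup_D4_free: "tournament V E \<Longrightarrow> T_blowup V E \<Longrightarrow> D4_free V E"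
  unfolding T_blowup_def using T_of_transitive_D4_free by blast

lemma T_blowup_then_transitive_D4_free:
  assumes T: "tournament V E" and "T_blowup_then_transitive V E"
  shows "D4_free V E"
proof -
  obtain A B where AB: "A \<noteq> {}" "V = A \<union> B" "\<And>a b. a \<in> A \<Longrightarrow> b \<in> B \<Longrightarrow> E a b"
    and A: "T_blowup A E" and B: "transitive_tournament B E"
    using assms(2) by (rule T_blowup_then_transitiveE) blast
  have "tournament A E" using tournament_subset[OF T _ AB(1)] AB(2) by blast
  then have "D4_free A E" using T_blowup_D4_free A by blast
  moreover have "transp_on B E" using transitive_tournament_imp_transp_on[OF T _ B] AB(2) by blast
  ultimately show ?thesis using D4_free_dominating_union[OF T AB(2,3)] by blast
qed

lemma T_of_transitive_enumeration:
  assumes g: "bij_betw g {..<n} V" and edges: "\<And>i j. i < n \<Longrightarrow> j < n \<Longrightarrow> T_edge n i j \<Longrightarrow> E (g i) (g j)"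
  shows "T_of_transitive V E n"
proof -
  have "V = (\<Union>i<n. {g i})" using bij_betw_imp_surj_on[OF g] by auto
  moreover have "{g i} \<inter> {g j} = {}" if "i < n" "j < n" "i \<noteq> j" for i j
    using inj_onD[OF bij_betw_imp_inj_on[OF g]] that by auto
  moreover have "{g i} \<subseteq> V" if "i < n" for i using bij_betwE[OF g] that by simp
  ultimately show ?thesis
    unfolding T_of_transitive_def subst_form_def using edges
    by (intro exI[of _ "\<lambda>i. {g i}"]) (simp add: transitive_tournament_singleton)
qed

lemma T_blowup_singleton: "T_blowup {z} E"
proof -
  have "T_of_transitive {z} E 1"
    by (rule T_of_transitive_enumeration[of "\<lambda>_. z"]) (auto simp: bij_betw_def inj_on_def T_edge_def)
  then show ?thesis unfolding T_blowup_def by (intro exI[of _ 1]) simp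
qed

lemma T_blowup_then_transitive_insert_sink:
  assumes T: "tournament V E" and z: "z \<in> V" "V - {z} \<noteq> {}" and sink: "\<And>w. w \<in> V - {z} \<Longrightarrow> E w z"
    and shape: "T_blowup (V - {z}) E \<or> T_blowup_then_transitive (V - {z}) E"
  shows "T_blowup_then_transitive V E"
  using shape
proof
  assume "T_blowup (V - {z}) E"
  then have "T_blowup_then_transitive ((V - {z}) \<union> {z}) E"
    using z sink by (intro T_blowup_then_transitiveI) (simp_all add: transitive_tournament_singleton)
  moreover have "V = (V - {z}) \<union> {z}" using z by blast
  ultimately show ?thesis by simp
next
  assume "T_blowup_then_transitive (V - {z}) E"
  then obtain A B where AB: "A \<noteq> {}" "V - {z} = A \<union> B" "A \<inter> B = {}"
    "\<And>a b. a \<in> A \<Longrightarrow> b \<in> B \<Longrightarrow> E a b" "T_blowup A E" "transitive_tournament B E"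
    by (rule T_blowup_then_transitiveE) blast
  have A: "A \<subseteq> V - {z}" and B: "B \<subseteq> V - {z}" using AB(2) by blast+
  have "transp_on (insert z B) E"
    using transp_on_insert_sink[OF T _ z(1) _ transitive_tournament_imp_transp_on[OF T _ AB(6)]] B sink
    by blast
  then have "transitive_tournament (insert z B) E"
    using transp_on_imp_transitive_tournament[OF T] B z(1) by blast
  moreover have "A \<inter> insert z B = {}" using A AB(3) by blast
  moreover have "E a b" if "a \<in> A" "b \<in> insert z B" for a b
    using that A AB(4) sink by blast
  ultimately have "T_blowup_then_transitive (A \<union> insert z B) E"
    using T_blowup_then_transitiveI[OF AB(1) insert_not_empty] AB(5) by blast
  moreover have "A \<union> insert z B = V" using AB(2) z(1) by blast
  ultimately show ?thesis by simp
qed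

lemma T_of_transitive_insert_twin:
  assumes T: "tournament V E" and W: "W \<subseteq> V" "u \<in> W" "v \<in> V" "v \<notin> W" and uv: "twins V E u v"
    and F: "T_of_transitive W E n"
  shows "T_of_transitive (insert v W) E n"
  unfolding T_of_transitive_def
proof (rule subst_form_insert_twin[OF T W uv _ F[unfolded T_of_transitive_def]])
  show "\<And>i. \<not> T_edge n i i" by (simp add: T_edge_def)
  fix S assume S: "transitive_tournament S E" "u \<in> S" "S \<subseteq> W"
  then have SV: "S \<subseteq> V" using W(1) by blast
  have "transp_on S E" using transitive_tournament_imp_transp_on[OF T SV S(1)] .
  then have "transp_on (insert v S) E" by (rule transp_on_insert_twin[OF T SV S(2) W(3) uv])
  then show "transitive_tournament (insert v S) E"
    using transp_on_imp_transitive_tournament[OF T] SV W(3) by simp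
qed

lemma T_blowup_insert_twin:
  "tournament V E \<Longrightarrow> W \<subseteq> V \<Longrightarrow> u \<in> W \<Longrightarrow> v \<in> V \<Longrightarrow> v \<notin> W \<Longrightarrow> twins V E u v \<Longrightarrow>
    T_blowup W E \<Longrightarrow> T_blowup (insert v W) E"
  unfolding T_blowup_def by (metis T_of_transitive_insert_twin)

lemma T_blowup_then_transitive_insert_twin:
  assumes T: "tournament V E" and W: "W \<subseteq> V" "u \<in> W" "v \<in> V" "v \<notin> W" and uv: "twins V E u v"
    and F: "T_blowup_then_transitive W E"
  shows "T_blowup_then_transitive (insert v W) E"
proof -
  obtain n where "odd n" and F': "subst_form W E 2 (\<lambda>i j. i < j)
     (\<lambda>i S. if i = 0 then T_of_transitive S E n else transitive_tournament S E)"
    using F unfolding T_blowup_then_transitive_def by blast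
  have "subst_form (insert v W) E 2 (\<lambda>i j. i < j)
     (\<lambda>i S. if i = 0 then T_of_transitive S E n else transitive_tournament S E)"
  proof (rule subst_form_insert_twin[OF T W uv _ F'])
    fix i :: nat and S
    assume S: "if i = 0 then T_of_transitive S E n else transitive_tournament S E" "u \<in> S" "S \<subseteq> W"
    then have SV: "S \<subseteq> V" using W(1) by blast
    have "v \<notin> S" using S(3) W(4) by blast
    show "if i = 0 then T_of_transitive (insert v S) E n else transitive_tournament (insert v S) E"
    proof (cases "i = 0")
      case True
      then show ?thesis using S(1) T_of_transitive_insert_twin[OF T SV S(2) W(3) \<open>v \<notin> S\<close> uv] by simp
    next
      case False
      then have "transp_on S E" using S(1) transitive_tournament_imp_transp_on[OF T SV] by simp
      then have "transp_on (insert v S) E" by (rule transp_on_insert_twin[OF T SV S(2) W(3) uv])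
      then show ?thesis using False transp_on_imp_transitive_tournament[OF T] SV W(3) by simp
    qed
  qed simp
  then show ?thesis unfolding T_blowup_then_transitive_def using \<open>odd n\<close> by blast
qed

section \<open>Tournaments without sinks or twins\<close>

lemma tournament_conversep: "tournament V E \<Longrightarrow> tournament V E\<inverse>\<inverse>"
  unfolding tournament_def conversep_iff by blast

lemma transp_on_has_source:
  assumes "tournament V E" "S \<subseteq> V" "S \<noteq> {}" "transp_on S E"
  shows "\<exists>u\<in>S. \<forall>w\<in>S. w \<noteq> u \<longrightarrow> E u w"
  using transp_on_has_sink[OF tournament_conversep[OF assms(1)] assms(2,3)] assms(4) by simp

locale reduced_D4_free_tournament =
  fixes V :: "'a set" and E :: "'a \<Rightarrow> 'a \<Rightarrow> bool"
  assumes tournament: "tournament V E" and D4_free: "D4_free V E"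
    and no_sink: "\<And>v. v \<in> V \<Longrightarrow> \<exists>w\<in>V. E v w"
    and no_twins: "\<And>u v. u \<in> V \<Longrightarrow> v \<in> V \<Longrightarrow> \<not> twins V E u v"
begin

lemmas irrefl = tournament_irrefl[OF tournament]
  and asym = tournament_asym[OF tournament]
  and total = tournament_total[OF tournament]
  and finite = tournament_finite[OF tournament]

text \<open>Just as D4-freeness makes out-neighbourhoods transitive, the absence of sinks makes
  in-neighbourhoods transitive: the common out-neighbours of the triangle form a transitive set
  containing v, an out-neighbour r of its sink lies outside it, and every orientation of the
  edges between r and the triangle then produces a dominated cyclic triangle.\<close>
lemma cyclic_triangle_dominates_nothing:
  assumes V: "a \<in> V" "b \<in> V" "c \<in> V" "v \<in> V"
    and e: "E a b" "E b c" "E c a" "E a v" "E b v" "E c v"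
  shows False
proof -
  define D where "D = {w\<in>V. E a w \<and> E b w \<and> E c w}"
  have D: "D \<subseteq> V" "v \<in> D" unfolding D_def using V e by blast+
  have "transp_on D E"
  proof (rule transp_onI)
    fix x y z assume xyz: "x \<in> D" "y \<in> D" "z \<in> D" "E x y" "E y z"
    then have "x \<in> V" "y \<in> V" "z \<in> V" "E a x" "E a y" "E a z" unfolding D_def by blast+
    then show "E x z"
      using D4_freeD[OF D4_free, of a x y z] V xyz(4,5) total asym by metis
  qed
  then obtain d where d: "d \<in> D" "\<And>w. w \<in> D \<Longrightarrow> w \<noteq> d \<Longrightarrow> E w d"
    using transp_on_has_sink[OF tournament D(1)] D(2) by blast
  have dV: "d \<in> V" and ed: "E a d" "E b d" "E c d" using d(1) unfolding D_def by blast+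
  obtain r where r: "r \<in> V" "E d r" using no_sink[OF dV] by blast
  have "r \<notin> D" using d(2) r asym dV irrefl by blast
  then have "\<not> (E a r \<and> E b r \<and> E c r)" using r unfolding D_def by blast
  moreover have "\<not> (E r a \<and> E r b \<and> E r c)" using D4_freeD[OF D4_free, of r a b c] r V e by blast
  moreover have "\<not> (E a r \<and> E r b)" "\<not> (E b r \<and> E r c)" "\<not> (E c r \<and> E r a)"
    using D4_freeD[OF D4_free, of a d r b] D4_freeD[OF D4_free, of b d r c]
      D4_freeD[OF D4_free, of c d r a] V r dV ed e by blast+
  moreover have "r \<noteq> a" "r \<noteq> b" "r \<noteq> c" using ed r asym dV V by blast+
  ultimately show False using total r V asym by metis
qed

definition out :: "'a \<Rightarrow> 'a set" where "out v = {w\<in>V. E v w}"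

definition outdeg :: "'a \<Rightarrow> nat" where "outdeg v = card (out v)"

definition succ :: "'a \<Rightarrow> 'a" where
  "succ v = (SOME u. u \<in> out v \<and> (\<forall>w\<in>out v. w \<noteq> u \<longrightarrow> E u w))"

lemma out_subset: "out v \<subseteq> V"
  unfolding out_def by blast

lemma finite_out: "finite (out v)"
  using finite out_subset by (rule finite_subset[rotated])

lemma transp_on_out:
  assumes v: "v \<in> V"
  shows "transp_on (out v) E"
proof (rule transp_onI)
  fix x y z assume xyz: "x \<in> out v" "y \<in> out v" "z \<in> out v" "E x y" "E y z"
  then have V: "x \<in> V" "y \<in> V" "z \<in> V" and "E v x" "E v y" "E v z" unfolding out_def by blast+
  then have "\<not> E z x" using D4_freeD[OF D4_free v] xyz(4,5) by blast
  moreover have "x \<noteq> z" using xyz(4,5) asym V by blast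
  ultimately show "E x z" using total V by blast
qed

lemma succ:
  assumes v: "v \<in> V"
  shows "succ v \<in> out v" and "\<And>w. w \<in> out v \<Longrightarrow> w \<noteq> succ v \<Longrightarrow> E (succ v) w"
proof -
  have "out v \<noteq> {}" using no_sink[OF v] unfolding out_def by blast
  then have "\<exists>u. u \<in> out v \<and> (\<forall>w\<in>out v. w \<noteq> u \<longrightarrow> E u w)"
    using transp_on_has_source[OF tournament out_subset _ transp_on_out[OF v]] by blast
  then have "succ v \<in> out v \<and> (\<forall>w\<in>out v. w \<noteq> succ v \<longrightarrow> E (succ v) w)"
    unfolding succ_def by (rule someI_ex)
  then show "succ v \<in> out v" "\<And>w. w \<in> out v \<Longrightarrow> w \<noteq> succ v \<Longrightarrow> E (succ v) w" by blast+
qed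

lemma succ_unique:
  assumes v: "v \<in> V" and u: "u \<in> out v" "\<And>w. w \<in> out v \<Longrightarrow> w \<noteq> u \<Longrightarrow> E u w"
  shows "u = succ v"
proof (rule ccontr)
  assume "u \<noteq> succ v"
  then have "E u (succ v)" "E (succ v) u" using u succ[OF v] by auto
  then show False using asym u(1) succ(1)[OF v] out_subset by blast
qed

lemma succ_in_V: "v \<in> V \<Longrightarrow> succ v \<in> V"
  using succ(1) out_subset by blast

lemma succ_pow_in_V: "v \<in> V \<Longrightarrow> (succ ^^ t) v \<in> V"
  by (induction t) (auto simp: succ_in_V)

lemma succ_of_consecutive:
  assumes v: "v \<in> V" and ab: "a \<in> out v" "b \<in> out v" "E a b"
    and between: "\<And>c. c \<in> out v \<Longrightarrow> E a c \<Longrightarrow> E c b \<Longrightarrow> False"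
  shows "b = succ a"
proof (rule succ_unique)
  have V: "a \<in> V" "b \<in> V" and ev: "E v a" "E v b" using ab unfolding out_def by blast+
  show "a \<in> V" "b \<in> out a" using V ab(3) unfolding out_def by blast+
  fix w assume w: "w \<in> out a" "w \<noteq> b"
  then have wV: "w \<in> V" and aw: "E a w" unfolding out_def by blast+
  show "E b w"
  proof (rule ccontr)
    assume "\<not> E b w"
    then have wb: "E w b" using total wV V w(2) by blast
    show False
    proof (cases "E v w")
      case True
      then show False using between[of w] wV aw wb unfolding out_def by blast
    next
      case False
      have "w \<noteq> v" using aw ev(1) asym V(1) v by blast
      then have "E w v" using False total wV v by blast
      then show False
        using cyclic_triangle_dominates_nothing[of v a w b] v V wV ev aw wb ab(3) by blast
    qed
  qed
qed

lemma out_eq_succ_powers: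
  assumes v: "v \<in> V"
  shows "out v = (\<lambda>i. (succ ^^ Suc i) v) ` {..<outdeg v}"
proof -
  have "transitive_tournament (out v) E"
    using transp_on_imp_transitive_tournament[OF tournament out_subset transp_on_out[OF v]] .
  then obtain f where f: "bij_betw f {..<outdeg v} (out v)"
    and ord: "\<And>i j. i < j \<Longrightarrow> j < outdeg v \<Longrightarrow> E (f i) (f j)"
    unfolding transitive_tournament_def outdeg_def by blast
  have index: "\<exists>j<outdeg v. c = f j" if "c \<in> out v" for c
    using that bij_betw_imp_surj_on[OF f] by force
  have less: "i < j" if "i < outdeg v" "j < outdeg v" "E (f i) (f j)" for i j
    using transitive_tournament_index_less[OF tournament out_subset f[unfolded outdeg_def]]
      ord that unfolding outdeg_def by blast
  have "f i = (succ ^^ Suc i) v" if "i < outdeg v" for i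
    using that
  proof (induction i)
    case 0
    have "E (f 0) c" if "c \<in> out v" "c \<noteq> f 0" for c
      using index[OF that(1)] that(2) ord by (metis gr0I)
    then show ?case using succ_unique[OF v] bij_betwE[OF f] 0 by simp
  next
    case (Suc i)
    have "f (Suc i) = succ (f i)"
    proof (rule succ_of_consecutive[OF v])
      show "f i \<in> out v" "f (Suc i) \<in> out v" using bij_betwE[OF f] Suc.prems by simp_all
      show "E (f i) (f (Suc i))" using ord Suc.prems by simp
      fix c assume "c \<in> out v" "E (f i) c" "E c (f (Suc i))"
      then obtain j where "j < outdeg v" "c = f j" "i < j" "j < Suc i"
        using index less Suc.prems by (metis Suc_lessD)
      then show False by simp
    qed
    then show ?case using Suc by simp
  qed
  then show ?thesis using bij_betw_imp_surj_on[OF f] by (auto simp: image_def)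
qed

lemma succ_pow_in_out:
  assumes "v \<in> V" "1 \<le> t" "t \<le> outdeg v"
  shows "(succ ^^ t) v \<in> out v"
proof -
  have "t - 1 < outdeg v" "Suc (t - 1) = t" using assms(2,3) by simp_all
  then show ?thesis using out_eq_succ_powers[OF assms(1)] by (metis image_eqI lessThan_iff)
qed

lemma out_imp_succ_power:
  assumes "v \<in> V" "w \<in> out v"
  obtains t where "1 \<le> t" "t \<le> outdeg v" "w = (succ ^^ t) v"
proof -
  obtain i where "i < outdeg v" "w = (succ ^^ Suc i) v"
    using assms out_eq_succ_powers by blast
  then show thesis by (intro that[of "Suc i"]) simp_all
qed

lemma inj_on_succ: "inj_on succ V"
proof -
  have False if ab: "a \<in> V" "b \<in> V" "E a b" "succ a = succ b" for a b
  proof -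
    have "E b (succ a)" using succ(1)[OF ab(2)] ab(4) unfolding out_def by simp
    moreover have "b \<noteq> succ a" using calculation irrefl ab(2) by blast
    then have "E (succ a) b" using succ(2)[OF ab(1)] ab unfolding out_def by blast
    ultimately show False using asym ab(2) succ_in_V[OF ab(1)] by blast
  qed
  then show ?thesis unfolding inj_on_def by (metis total)
qed

lemma succ_image: "succ ` V = V"
  using card_image[OF inj_on_succ] succ_in_V finite by (simp add: card_subset_eq image_subsetI)

text \<open>The successor of v beats every other out-neighbour of v, so v can only have more
  out-neighbours than its successor if the two are twins.\<close>
lemma outdeg_le_outdeg_succ:
  assumes v: "v \<in> V"
  shows "outdeg v \<le> outdeg (succ v)"
proof (rule ccontr)
  assume "\<not> outdeg v \<le> outdeg (succ v)"
  have sub: "out v - {succ v} \<subseteq> out (succ v)"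
  proof
    fix w assume "w \<in> out v - {succ v}"
    then have "w \<in> V" "E (succ v) w" using succ(2)[OF v, of w] unfolding out_def by auto
    then show "w \<in> out (succ v)" unfolding out_def by blast
  qed
  moreover have "card (out v - {succ v}) = outdeg v - 1"
    using succ(1)[OF v] finite_out unfolding outdeg_def by simp
  ultimately have "card (out (succ v)) \<le> card (out v - {succ v})"
    using \<open>\<not> outdeg v \<le> outdeg (succ v)\<close> unfolding outdeg_def by linarith
  then have eq: "out v - {succ v} = out (succ v)" by (rule card_seteq[OF finite_out sub])
  have "E v (succ v)" using succ(1)[OF v] unfolding out_def by blast
  then have "v \<noteq> succ v" using irrefl[OF v] by auto
  moreover have "E v w \<longleftrightarrow> E (succ v) w" if "w \<in> V" "w \<noteq> v" "w \<noteq> succ v" for w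
    using eq that unfolding out_def by blast
  ultimately have "twins V E v (succ v)" unfolding twins_def by blast
  then show False using no_twins[OF v succ_in_V[OF v]] by blast
qed

lemma outdeg_succ:
  assumes v: "v \<in> V"
  shows "outdeg (succ v) = outdeg v"
proof (rule ccontr)
  assume "outdeg (succ v) \<noteq> outdeg v"
  then have "outdeg v < (outdeg \<circ> succ) v" using outdeg_le_outdeg_succ[OF v] by simp
  then have "sum outdeg V < sum (outdeg \<circ> succ) V"
    using outdeg_le_outdeg_succ v by (intro sum_strict_mono_ex1[OF finite]) auto
  also have "\<dots> = sum outdeg (succ ` V)" by (simp add: sum.reindex[OF inj_on_succ])
  finally show False using succ_image by simp
qed

lemma outdeg_succ_pow: "v \<in> V \<Longrightarrow> outdeg ((succ ^^ t) v) = outdeg v"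
  by (induction t) (simp_all add: outdeg_succ succ_pow_in_V)

lemma outdeg_eq:
  assumes "v \<in> V" "w \<in> V"
  shows "outdeg w = outdeg v"
proof -
  have along_edge: "outdeg b = outdeg a" if ab: "a \<in> V" "b \<in> V" "E a b" for a b
  proof -
    have "b \<in> out a" using ab unfolding out_def by blast
    then obtain t where "b = (succ ^^ t) a" using out_imp_succ_power[OF ab(1)] by blast
    then show ?thesis using outdeg_succ_pow[OF ab(1)] by simp
  qed
  show ?thesis
  proof (cases "v = w")
    case False
    then show ?thesis using along_edge[of v w] along_edge[of w v] total assms by metis
  qed simp
qed

lemma succ_pow_inj: "x \<in> V \<Longrightarrow> y \<in> V \<Longrightarrow> (succ ^^ t) x = (succ ^^ t) y \<Longrightarrow> x = y"
proof (induction t)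
  case (Suc t)
  then show ?case using inj_onD[OF inj_on_succ] succ_pow_in_V by simp
qed simp

lemma E_succ_pow: "w \<in> V \<Longrightarrow> 1 \<le> t \<Longrightarrow> t \<le> outdeg w \<Longrightarrow> E w ((succ ^^ t) w)"
  using succ_pow_in_out unfolding out_def by blast

lemma succ_pow_neq:
  assumes w: "w \<in> V" and t: "1 \<le> t" "t \<le> 2 * outdeg w"
  shows "(succ ^^ t) w \<noteq> w"
proof
  assume eq: "(succ ^^ t) w = w"
  show False
  proof (cases "t \<le> outdeg w")
    case True
    then show False using E_succ_pow[OF w t(1)] eq irrefl w by simp
  next
    case False
    define u where "u = (succ ^^ outdeg w) w"
    have u: "u \<in> V" "outdeg u = outdeg w"
      unfolding u_def using succ_pow_in_V outdeg_succ_pow w by blast+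
    have "1 \<le> outdeg w" using False t by simp
    then have "E w u" unfolding u_def using E_succ_pow[OF w] by simp
    moreover have "(succ ^^ (t - outdeg w)) u = (succ ^^ (t - outdeg w + outdeg w)) w"
      unfolding u_def by (simp add: funpow_add)
    then have "(succ ^^ (t - outdeg w)) u = w" using eq False by simp
    then have "E u w" using E_succ_pow[OF u(1), of "t - outdeg w"] u(2) False t by simp
    ultimately show False using asym w u(1) by blast
  qed
qed

text \<open>Each in-neighbour w of v satisfies v = succ^t w for some t between 1 and the common
  out-degree, and t determines w.\<close>
lemma card_le_twice_outdeg:
  assumes v: "v \<in> V"
  shows "card V \<le> 2 * outdeg v + 1"
proof -
  define In where "In = {w\<in>V. E w v}"
  define pos where "pos w = (SOME t. 1 \<le> t \<and> t \<le> outdeg v \<and> (succ ^^ t) w = v)" for w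
  have pos: "1 \<le> pos w \<and> pos w \<le> outdeg v \<and> (succ ^^ pos w) w = v" if "w \<in> In" for w
  proof -
    have w: "w \<in> V" "v \<in> out w" using that v unfolding In_def out_def by blast+
    obtain t where "1 \<le> t" "t \<le> outdeg w" "v = (succ ^^ t) w" by (rule out_imp_succ_power[OF w])
    moreover have "outdeg w = outdeg v" by (rule outdeg_eq[OF v w(1)])
    ultimately have "1 \<le> t \<and> t \<le> outdeg v \<and> (succ ^^ t) w = v" by simp
    then show ?thesis unfolding pos_def by (rule someI)
  qed
  have "inj_on pos In"
  proof (rule inj_onI)
    fix w w' assume w: "w \<in> In" "w' \<in> In" "pos w = pos w'"
    then have "(succ ^^ pos w) w = (succ ^^ pos w) w'" using pos[OF w(1)] pos[OF w(2)] by simp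
    moreover have "w \<in> V" "w' \<in> V" using w unfolding In_def by blast+
    ultimately show "w = w'" using succ_pow_inj by blast
  qed
  moreover have "pos ` In \<subseteq> {1..outdeg v}" using pos by auto
  ultimately have "card In \<le> card {1..outdeg v}" by (rule card_inj_on_le) simp
  have fin: "finite (out v \<union> In)" using finite_out finite unfolding In_def by simp
  have "V \<subseteq> insert v (out v \<union> In)" using total v unfolding In_def out_def by blast
  then have "card V \<le> card (insert v (out v \<union> In))" using fin by (intro card_mono) simp_all
  also have "\<dots> \<le> Suc (card (out v \<union> In))" using fin by (simp add: card_insert_if)
  also have "\<dots> \<le> Suc (card (out v) + card In)" using card_Un_le by simp
  finally show ?thesis using \<open>card In \<le> card {1..outdeg v}\<close> unfolding outdeg_def by simp
qed

lemma succ_pow_add: "(succ ^^ m) ((succ ^^ n) v) = (succ ^^ (m + n)) v"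
  by (simp add: funpow_add)

lemma succ_orbit:
  assumes v: "v \<in> V"
  shows "bij_betw (\<lambda>i. (succ ^^ i) v) {..<2 * outdeg v + 1} V"
proof -
  define n where "n = 2 * outdeg v + 1"
  have "(succ ^^ i) v \<noteq> (succ ^^ j) v" if "i < j" "j < n" for i j
  proof
    assume eq: "(succ ^^ i) v = (succ ^^ j) v"
    have "(succ ^^ (j - i)) ((succ ^^ i) v) = (succ ^^ j) v" using that(1) by (simp add: succ_pow_add)
    then have "(succ ^^ (j - i)) ((succ ^^ i) v) = (succ ^^ i) v" using eq by simp
    moreover have "outdeg ((succ ^^ i) v) = outdeg v" using outdeg_succ_pow[OF v] .
    ultimately show False
      using succ_pow_neq[OF succ_pow_in_V[OF v], of "j - i"] that unfolding n_def by simp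
  qed
  then have inj: "inj_on (\<lambda>i. (succ ^^ i) v) {..<n}"
    unfolding inj_on_def by (metis lessThan_iff linorder_cases)
  have "(\<lambda>i. (succ ^^ i) v) ` {..<n} \<subseteq> V" using succ_pow_in_V[OF v] by blast
  moreover have "card V \<le> card ((\<lambda>i. (succ ^^ i) v) ` {..<n})"
    using card_le_twice_outdeg[OF v] card_image[OF inj] unfolding n_def by simp
  ultimately have "(\<lambda>i. (succ ^^ i) v) ` {..<n} = V" using card_seteq[OF finite] by blast
  then show ?thesis using inj unfolding n_def bij_betw_def by blast
qed

lemma succ_pow_period:
  assumes v: "v \<in> V"
  shows "(succ ^^ (2 * outdeg v + 1)) v = v"
proof -
  define n where "n = 2 * outdeg v + 1"
  have "(succ ^^ n) v \<in> V" using succ_pow_in_V[OF v] .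
  then obtain i where i: "i < n" "(succ ^^ n) v = (succ ^^ i) v"
    using bij_betw_imp_surj_on[OF succ_orbit[OF v]] unfolding n_def[symmetric] by force
  have "i = 0"
  proof (rule ccontr)
    assume "i \<noteq> 0"
    have "(succ ^^ i) ((succ ^^ (n - i)) v) = (succ ^^ i) v"
      using i by (simp add: succ_pow_add)
    then have "(succ ^^ (n - i)) v = v" using succ_pow_inj succ_pow_in_V v by blast
    moreover have "1 \<le> n - i" "n - i \<le> 2 * outdeg v" using i \<open>i \<noteq> 0\<close> unfolding n_def by auto
    ultimately show False using succ_pow_neq[OF v] by blast
  qed
  then show ?thesis using i unfolding n_def by simp
qed

lemma is_T_blowup: "T_blowup V E"
proof -
  obtain v where v: "v \<in> V" using tournament unfolding tournament_def by blast
  define n where "n = 2 * outdeg v + 1"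
  define g where "g i = (succ ^^ i) v" for i
  have g_shift: "(succ ^^ t) (g i) = g (t + i)" for t i unfolding g_def by (rule succ_pow_add)
  have "E (g i) (g j)" if ij: "i < n" "j < n" "T_edge n i j" for i j
  proof -
    define t where "t = (j + n - i) mod n"
    have t: "1 \<le> t" "t \<le> outdeg (g i)"
      using ij(3) outdeg_succ_pow[OF v] unfolding T_edge_def t_def n_def g_def by auto
    have "(succ ^^ t) (g i) = g j"
    proof (cases "i \<le> j")
      case True
      then show ?thesis using g_shift cyclic_offset_eq[OF ij(1,2)] unfolding t_def by simp
    next
      case False
      then have "t + i = j + n" using cyclic_offset_eq[OF ij(1,2)] ij unfolding t_def by simp
      then have "(succ ^^ t) (g i) = (succ ^^ j) (g n)" using g_shift by simp
      also have "g n = v" using succ_pow_period[OF v] unfolding g_def n_def .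
      finally show ?thesis unfolding g_def .
    qed
    then show ?thesis using E_succ_pow[OF _ t] succ_pow_in_V[OF v] unfolding g_def by metis
  qed
  then have "T_of_transitive V E n"
    using succ_orbit[OF v] unfolding g_def n_def by (intro T_of_transitive_enumeration) simp_all
  then show ?thesis unfolding T_blowup_def by (intro exI[of _ n]) (simp add: n_def)
qed

end

section \<open>Characterisation of D4-free tournaments\<close>

lemma D4_free_imp_T_blowup_or_T_blowup_then_transitive:
  assumes "tournament V E" "D4_free V E"
  shows "T_blowup V E \<or> T_blowup_then_transitive V E"
  using assms
proof (induction "card V" arbitrary: V rule: less_induct)
  case less
  note T = less.prems(1) and D4 = less.prems(2)
  have IH: "T_blowup (V - {x}) E \<or> T_blowup_then_transitive (V - {x}) E"
    if "x \<in> V" "V - {x} \<noteq> {}" for x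
    using less.hyps[of "V - {x}"] tournament_subset[OF T _ that(2)] D4_free_subset[OF D4]
      card_Diff1_less[OF tournament_finite[OF T] that(1)] by blast
  consider (sink) z where "z \<in> V" "\<And>w. w \<in> V \<Longrightarrow> w \<noteq> z \<Longrightarrow> E w z"
    | (twins) u v where "u \<in> V" "v \<in> V" "twins V E u v"
    | (reduced) "reduced_D4_free_tournament V E"
  proof (cases "\<exists>z\<in>V. \<forall>w\<in>V. \<not> E z w")
    case True
    then show thesis using that(1) tournament_total[OF T] by metis
  next
    case no_sink: False
    show thesis
    proof (cases "\<exists>u\<in>V. \<exists>v\<in>V. twins V E u v")
      case True
      then show thesis using that(2) by blast
    next
      case False
      have "reduced_D4_free_tournament V E" using no_sink False T D4 by unfold_locales blast+
      then show thesis by (rule that(3))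
    qed
  qed
  then show ?case
  proof cases
    case (sink z)
    show ?thesis
    proof (cases "V - {z} = {}")
      case True
      then have "V = {z}" using sink(1) by blast
      then show ?thesis by (simp add: T_blowup_singleton)
    next
      case False
      then show ?thesis
        using T_blowup_then_transitive_insert_sink[OF T sink(1) False] sink IH[OF sink(1) False] by blast
    qed
  next
    case (twins u v)
    then have u: "u \<in> V - {v}" unfolding twins_def by blast
    then have "V - {v} \<noteq> {}" by blast
    then have "T_blowup (insert v (V - {v})) E \<or> T_blowup_then_transitive (insert v (V - {v})) E"
      using IH[OF twins(2)] T_blowup_insert_twin[OF T _ u twins(2) _ twins(3)]
        T_blowup_then_transitive_insert_twin[OF T _ u twins(2) _ twins(3)] by blast
    then show ?thesis using twins(2) by (simp add: insert_absorb)
  next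
    case reduced
    then show ?thesis using reduced_D4_free_tournament.is_T_blowup by blast
  qed
qed

theorem corollary3p9:
  fixes V :: "'a set" and E :: "'a \<Rightarrow> 'a \<Rightarrow> bool"
  assumes "tournament V E"
  shows "\<not> has_D4 V E \<longleftrightarrow>
    (\<exists>n. odd n \<and> T_of_transitive V E n) \<or>
    (\<exists>n. odd n \<and> subst_form V E 2 (\<lambda>i j. i < j)
        (\<lambda>i S. if i = 0 then T_of_transitive S E n else transitive_tournament S E))"
proof -
  have "\<not> has_D4 V E \<longleftrightarrow> D4_free V E" using has_D4_iff_not_D4_free[OF assms] by simp
  also have "\<dots> \<longleftrightarrow> T_blowup V E \<or> T_blowup_then_transitive V E"
    using D4_free_imp_T_blowup_or_T_blowup_then_transitive[OF assms]
      T_blowup_D4_free[OF assms] T_blowup_then_transitive_D4_free[OF assms] by blast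
  finally show ?thesis unfolding T_blowup_def T_blowup_then_transitive_def .
qed

end
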